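(* Let $n\ge2$, $p>n$, and let $A$ satisfy: (i) $A\in C([0,+\infty))$; (ii) $\delta\le A\le L$ for positive constants $\delta,L$; (iii) $t\mapsto t^{p-1}A(t)$ is strictly increasing for $t>0$. Let $f\in L^\infty(\mathbb{R}^n)$ satisfy $|f(x)|\le C_f|x|^{-(p+\epsilon)}$ for all $|x|$ sufficiently large, for positive constants $C_f,\epsilon$. Then there exists a family $\{v_a\}_{a\ge0}$ of radially symmetric functions $v_a=v_a(r)$, $r=|x|$, each a weak supersolution of $-\mathrm{div}(|\nabla v|^{p-2}A(|\nabla v|)\nabla v)=f$ in $\mathbb{R}^n\setminus\{0\}$, satisfying: (a) $v_a(0)=0$ and $v_a(r)$ is nondecreasing in $(0,+\infty)$ for every $a\ge0$; (b) $v_a$ is unbounded in $(0,+\infty)$ for $a>0$; indeed there is a constant $c_0=c_0(n,p,L)>0$ with $v_a(r)\ge c_0\,a\,r^{\alpha}$ for $r\ge0$, where $\alpha=\frac{p-n}{p-1}$; (c) $v_0$ is bounded in $(0,+\infty)$; indeed there is a positive constant $C_0$ with $v_0(r)\le C_0$; (d) $v_a(r)\to v_0(r)$ as $a\to0$ for every $r\in(0,+\infty)$.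
   Context: A function $v\in W^{1,p}_{loc}(\Omega)$ is a weak supersolution of $-\mathrm{div}(|\nabla v|^{p-2}A(|\nabla v|)\nabla v)=f$ in an open set $\Omega$ if $\int_\Omega |\nabla v|^{p-2}A(|\nabla v|)\nabla v\cdot\nabla\eta\,dx\ge\int_\Omega f\eta\,dx$ for all nonnegative $\eta\in C_0^\infty(\Omega)$. *)

theory Defs
  imports "HOL-Analysis.Analysis"
begin

definition partial_deriv :: "'n::finite \<Rightarrow> (real^'n \<Rightarrow> real) \<Rightarrow> real^'n \<Rightarrow> real" where
  "partial_deriv i f x = frechet_derivative f (at x) (axis i 1)"

fun iter_partial :: "'n::finite list \<Rightarrow> (real^'n \<Rightarrow> real) \<Rightarrow> real^'n \<Rightarrow> real" where
  "iter_partial [] f = f"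
| "iter_partial (i # is) f = partial_deriv i (iter_partial is f)"

definition smooth :: "(real^'n::finite \<Rightarrow> real) \<Rightarrow> bool" where
  "smooth f \<longleftrightarrow> (\<forall>is. iter_partial is f differentiable_on UNIV)"

definition test_fun :: "(real^'n::finite) set \<Rightarrow> (real^'n \<Rightarrow> real) \<Rightarrow> bool" where
  "test_fun \<Omega> \<eta> \<longleftrightarrow> smooth \<eta> \<and> compact (closure {x. \<eta> x \<noteq> 0}) \<and> closure {x. \<eta> x \<noteq> 0} \<subseteq> \<Omega>"

definition loc_Lp :: "(real^'n::finite) set \<Rightarrow> real \<Rightarrow> (real^'n \<Rightarrow> real) \<Rightarrow> bool" where
  "loc_Lp \<Omega> p u \<longleftrightarrow> (\<forall>K. compact K \<and> K \<subseteq> \<Omega> \<longrightarrow>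
      set_borel_measurable lebesgue K u \<and> set_integrable lebesgue K (\<lambda>x. \<bar>u x\<bar> powr p))"

definition weak_grad_W1p_loc ::
  "(real^'n::finite) set \<Rightarrow> real \<Rightarrow> (real^'n \<Rightarrow> real) \<Rightarrow> (real^'n \<Rightarrow> real^'n) \<Rightarrow> bool" where
  "weak_grad_W1p_loc \<Omega> p v g \<longleftrightarrow> loc_Lp \<Omega> p v \<and> (\<forall>i. loc_Lp \<Omega> p (\<lambda>x. g x $ i)) \<and>
     (\<forall>\<phi> i. test_fun \<Omega> \<phi> \<longrightarrow>
        (\<integral>x. v x * partial_deriv i \<phi> x \<partial>lebesgue) = - (\<integral>x. g x $ i * \<phi> x \<partial>lebesgue))"

definition weak_supersol ::
  "(real^'n::finite) set \<Rightarrow> real \<Rightarrow> (real \<Rightarrow> real) \<Rightarrow> (real^'n \<Rightarrow> real) \<Rightarrow> (real^'n \<Rightarrow> real) \<Rightarrow> bool" where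
  "weak_supersol \<Omega> p A f v \<longleftrightarrow> (\<exists>g. weak_grad_W1p_loc \<Omega> p v g \<and>
     (\<forall>\<eta>. test_fun \<Omega> \<eta> \<and> (\<forall>x. \<eta> x \<ge> 0) \<longrightarrow>
        (\<integral>x. norm (g x) powr (p - 2) * A (norm (g x)) * (g x \<bullet> (\<chi> i. partial_deriv i \<eta> x)) \<partial>lebesgue)
          \<ge> (\<integral>x. f x * \<eta> x \<partial>lebesgue)))"

end

(* The supersolutions are radial, v_a(x) = V_a(|x|) with V_a(r) = \<integral>_0^r w_a, where the slope w_a
   is defined by prescribing the flux:  w_a(s)^(p-1) A(w_a(s)) = \<Phi>_a(s) / s^(n-1)  with
   \<Phi>_a(s) = L a^(p-1) + K (1 + s^2)^(-\<beta>).  As t^(p-1) A(t) is an increasing bijection of (0,\<infinity>)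
   squeezed between \<delta> t^(p-1) and L t^(p-1), w_a(s) is comparable to s^(-(n-1)/(p-1)), which is
   integrable at 0 because p > n; the term L a^(p-1) forces w_a(s) \<ge> a s^(-(n-1)/(p-1)) and hence
   V_a(r) \<ge> a r^((p-n)/(p-1)).  The flux field \<Phi>_a(|x|) |x|^(-n) x has divergence
   \<Phi>_a'(r) r^(1-n) \<le> -2\<beta>K (1 + r^2)^(-\<beta>-n/2), and with 2\<beta> = p + \<epsilon> - n and K chosen from the
   bounds on f this dominates |f|; integrating by parts against test functions on R^n - {0} gives
   the supersolution inequality.  For a = 0 the slope decays like s^(-(2\<beta>+n-1)/(p-1)), which is
   integrable at infinity since 2\<beta> > p - n, so V_0 is bounded; V_a \<rightarrow> V_0 by dominated convergence. *)

theory Submission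
  imports Defs
begin

section \<open>Integration by parts against test functions\<close>

lemma integrable_lborel_vanishing_outside_cball:
  fixes u :: "'a::euclidean_space \<Rightarrow> real"
  assumes "continuous_on UNIV u" and "\<And>x. norm x > R \<Longrightarrow> u x = 0"
  shows "integrable lborel u"
proof -
  have "integrable lborel (\<lambda>x. indicator (cball 0 R) x *\<^sub>R u x)"
    by (rule borel_integrable_compact) (auto intro: continuous_on_subset[OF assms(1)])
  moreover have "(\<lambda>x. indicator (cball 0 R) x *\<^sub>R u x) = u"
    using assms(2) by (auto simp: indicator_def fun_eq_iff not_le)
  ultimately show ?thesis by simp
qed

lemma bounded_vanishing_outside_cball:
  fixes u :: "'a::euclidean_space \<Rightarrow> real"
  assumes "continuous_on UNIV u" and "\<And>x. norm x > R \<Longrightarrow> u x = 0"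
  obtains B where "\<And>x. \<bar>u x\<bar> \<le> B"
proof -
  have "compact (u ` cball 0 R)"
    by (rule compact_continuous_image) (auto intro: continuous_on_subset[OF assms(1)])
  then obtain B where B: "\<And>y. y \<in> u ` cball 0 R \<Longrightarrow> \<bar>y\<bar> \<le> B"
    using compact_imp_bounded bounded_iff by (metis real_norm_def)
  have "\<bar>u x\<bar> \<le> max B 0" for x
    using B[of "u x"] assms(2)[of x] by (cases "norm x \<le> R") auto
  then show ?thesis using that by blast
qed

lemma lborel_integral_translate:
  fixes u :: "'a::euclidean_space \<Rightarrow> real"
  assumes "integrable lborel u" and "u \<in> borel_measurable borel"
  shows "integrable lborel (\<lambda>x. u (x + c))" and "(\<integral>x. u (x + c) \<partial>lborel) = integral\<^sup>L lborel u"
proof -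
  have "integral\<^sup>L lborel u = integral\<^sup>L (distr lborel borel ((+) c)) u"
    by (simp add: lborel_distr_plus)
  also have "\<dots> = (\<integral>x. u (c + x) \<partial>lborel)"
    by (rule integral_distr) (auto simp: assms(2))
  finally show "(\<integral>x. u (x + c) \<partial>lborel) = integral\<^sup>L lborel u"
    by (simp add: add.commute)
  have "integrable (distr lborel borel ((+) c)) u"
    using assms(1) by (simp add: lborel_distr_plus)
  then have "integrable lborel (\<lambda>x. u (c + x))"
    by (subst (asm) integrable_distr_eq) (auto simp: assms(2))
  then show "integrable lborel (\<lambda>x. u (x + c))"
    by (simp add: add.commute)
qed

lemma difference_quotient_bound:
  fixes \<psi> \<psi>' :: "'a::real_normed_vector \<Rightarrow> real"
  assumes deriv: "\<And>x. ((\<lambda>t. \<psi> (x + t *\<^sub>R e)) has_real_derivative \<psi>' x) (at 0)"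
    and bound: "\<And>x. \<bar>\<psi>' x\<bar> \<le> B" and supp: "\<And>x. norm x > R \<Longrightarrow> \<psi> x = 0"
    and h: "0 < h" "h \<le> 1"
  shows "\<bar>(\<psi> (x + h *\<^sub>R e) - \<psi> x) / h\<bar> \<le> B * indicator (cball 0 (R + norm e)) x"
proof (cases "norm x \<le> R + norm e")
  case True
  have "((\<lambda>t. \<psi> (x + t *\<^sub>R e)) has_real_derivative \<psi>' (x + s *\<^sub>R e)) (at s)" for s
    using deriv[of "x + s *\<^sub>R e"] DERIV_shift[of "\<lambda>t. \<psi> (x + t *\<^sub>R e)" _ 0 s]
    by (simp add: algebra_simps scaleR_add_left)
  then obtain z where "\<psi> (x + h *\<^sub>R e) - \<psi> (x + 0 *\<^sub>R e) = (h - 0) * \<psi>' (x + z *\<^sub>R e)"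
    using MVT2[of 0 h "\<lambda>t. \<psi> (x + t *\<^sub>R e)" "\<lambda>t. \<psi>' (x + t *\<^sub>R e)"] h by blast
  then show ?thesis using bound[of "x + z *\<^sub>R e"] True h by (simp add: indicator_def)
next
  case False
  have "norm (x + h *\<^sub>R e) \<ge> norm x - h * norm e"
    using norm_triangle_ineq2[of x "- h *\<^sub>R e"] h by simp
  moreover have "h * norm e \<le> norm e"
    using h mult_right_mono[of h 1 "norm e"] by simp
  ultimately have "norm (x + h *\<^sub>R e) > R" using False by linarith
  then show ?thesis
    using False supp[of x] supp[of "x + h *\<^sub>R e"] norm_ge_zero[of e] by simp
qed

(* The difference quotients of \<psi> along e integrate to 0 by translation invariance; they
   converge to \<psi>' and are dominated thanks to the mean value theorem. *)
lemma lborel_integral_directional_derivative_eq_0: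
  fixes \<psi> \<psi>' :: "'a::euclidean_space \<Rightarrow> real"
  assumes deriv: "\<And>x. ((\<lambda>t. \<psi> (x + t *\<^sub>R e)) has_real_derivative \<psi>' x) (at 0)"
    and cont: "continuous_on UNIV \<psi>" and cont': "continuous_on UNIV \<psi>'"
    and supp: "\<And>x. norm x > R \<Longrightarrow> \<psi> x = 0 \<and> \<psi>' x = 0"
  shows "integral\<^sup>L lborel \<psi>' = 0"
proof -
  obtain B where B: "\<And>x. \<bar>\<psi>' x\<bar> \<le> B"
    using bounded_vanishing_outside_cball[OF cont'] supp by blast
  define h :: "nat \<Rightarrow> real" where "h m = 1 / (real m + 1)" for m
  have h: "0 < h m" "h m \<le> 1" for m
    by (simp_all add: h_def field_simps)
  define q where "q m x = (\<psi> (x + h m *\<^sub>R e) - \<psi> x) / h m" for m x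
  have int_\<psi>: "integrable lborel \<psi>"
    by (rule integrable_lborel_vanishing_outside_cball[OF cont]) (use supp in auto)
  note translate = lborel_integral_translate[OF int_\<psi> borel_measurable_continuous_onI[OF cont]]
  have q_integral: "integral\<^sup>L lborel (q m) = 0" for m
  proof -
    have "integral\<^sup>L lborel (q m) =
        ((\<integral>x. \<psi> (x + h m *\<^sub>R e) \<partial>lborel) - integral\<^sup>L lborel \<psi>) / h m"
      unfolding q_def using translate(1) int_\<psi> by simp
    then show ?thesis using translate(2) by simp
  qed
  have q_meas: "q m \<in> borel_measurable lborel" for m
    unfolding q_def measurable_lborel2
    by (intro borel_measurable_continuous_onI continuous_intros
          continuous_on_compose2[OF cont] cont) (use h[of m] in auto)
  have q_lim: "(\<lambda>m. q m x) \<longlonglongrightarrow> \<psi>' x" for x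
  proof -
    have "((\<lambda>t. (\<psi> (x + t *\<^sub>R e) - \<psi> (x + 0 *\<^sub>R e)) / t) \<longlongrightarrow> \<psi>' x) (at 0)"
      using deriv[of x] unfolding has_field_derivative_iff by simp
    moreover have "filterlim h (at 0) sequentially"
    proof (rule filterlim_atI)
      show "h \<longlonglongrightarrow> 0"
        unfolding h_def using LIMSEQ_inverse_real_of_nat by (simp add: divide_inverse add.commute)
      show "\<forall>\<^sub>F m in sequentially. h m \<noteq> 0"
        using h by (simp add: dual_order.strict_implies_not_eq)
    qed
    ultimately show ?thesis
      using filterlim_compose by (simp add: q_def) fastforce
  qed
  have q_bound: "norm (q m x) \<le> B * indicator (cball 0 (R + norm e)) x" for m x
    unfolding q_def real_norm_def by (rule difference_quotient_bound[OF deriv B _ h]) (use supp in auto)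
  have dominant: "integrable lborel (\<lambda>x. B * indicator (cball 0 (R + norm e)) x)"
    using borel_integrable_compact[of "cball 0 (R + norm e)" "\<lambda>_. B"] by (simp add: mult.commute)
  have "(\<lambda>m. integral\<^sup>L lborel (q m)) \<longlonglongrightarrow> integral\<^sup>L lborel \<psi>'"
    by (rule integral_dominated_convergence[OF _ q_meas dominant])
      (use q_bound in \<open>auto intro: borel_measurable_continuous_onI[OF cont'] q_lim\<close>)
  then show ?thesis using q_integral LIMSEQ_unique by (simp add: LIMSEQ_const_iff)
qed

lemma continuous_on_times_vanishing_outside:
  fixes u g :: "'a::topological_space \<Rightarrow> real"
  assumes "open U" and "closed C" and "C \<subseteq> U" and "continuous_on U u"
    and "continuous_on UNIV g" and "\<And>x. x \<notin> C \<Longrightarrow> g x = 0"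
  shows "continuous_on UNIV (\<lambda>x. u x * g x)"
proof -
  have "continuous_on (U \<union> - C) (\<lambda>x. u x * g x)"
  proof (rule continuous_on_open_Un)
    show "continuous_on U (\<lambda>x. u x * g x)"
      using assms(4,5) by (auto intro!: continuous_intros intro: continuous_on_subset)
    show "continuous_on (- C) (\<lambda>x. u x * g x)"
      by (rule continuous_on_eq[OF continuous_on_const[of _ 0]]) (use assms(6) in auto)
  qed (use assms(1,2) in auto)
  moreover have "U \<union> - C = UNIV" using assms(3) by auto
  ultimately show ?thesis by simp
qed

lemma has_real_derivative_line_outside_closed_support:
  fixes \<phi> :: "'a::real_normed_vector \<Rightarrow> real"
  assumes "closed C" and "\<And>x. x \<notin> C \<Longrightarrow> \<phi> x = 0" and "x \<notin> C"
  shows "((\<lambda>t. \<phi> (x + t *\<^sub>R e)) has_real_derivative 0) (at 0)"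
proof -
  have "open ((\<lambda>t::real. x + t *\<^sub>R e) -` (- C))"
    by (rule open_vimage) (use assms(1) in \<open>auto intro!: continuous_intros\<close>)
  then show ?thesis
    by (rule has_field_derivative_transform_within_open[OF DERIV_const[where k=0]])
       (use assms in auto)
qed

lemma lebesgue_integration_by_parts_directional:
  fixes u u' \<phi> \<phi>' :: "'a::euclidean_space \<Rightarrow> real"
  assumes U: "open U"
    and du: "\<And>x. x \<in> U \<Longrightarrow> ((\<lambda>t. u (x + t *\<^sub>R e)) has_real_derivative u' x) (at 0)"
    and cu: "continuous_on U u" and cu': "continuous_on U u'"
    and d\<phi>: "\<And>x. ((\<lambda>t. \<phi> (x + t *\<^sub>R e)) has_real_derivative \<phi>' x) (at 0)"
    and c\<phi>: "continuous_on UNIV \<phi>" and c\<phi>': "continuous_on UNIV \<phi>'"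
    and C: "compact C" "C \<subseteq> U" "\<And>x. x \<notin> C \<Longrightarrow> \<phi> x = 0"
  shows "integrable lebesgue (\<lambda>x. u x * \<phi>' x)" and "integrable lebesgue (\<lambda>x. u' x * \<phi> x)"
    and "(\<integral>x. u x * \<phi>' x \<partial>lebesgue) = - (\<integral>x. u' x * \<phi> x \<partial>lebesgue)"
proof -
  have closed_C: "closed C" using C(1) by (rule compact_imp_closed)
  have \<phi>'_0: "\<phi>' x = 0" if "x \<notin> C" for x
    using DERIV_unique[OF d\<phi>[of x] has_real_derivative_line_outside_closed_support[OF closed_C C(3) that]] .
  obtain R where outside: "\<And>x. norm x > R \<Longrightarrow> x \<notin> C"
    using compact_imp_bounded[OF C(1)] bounded_iff by (metis not_le)
  note times_continuous = continuous_on_times_vanishing_outside[OF U closed_C C(2)]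
  have ca: "continuous_on UNIV (\<lambda>x. u x * \<phi>' x)" by (rule times_continuous[OF cu c\<phi>' \<phi>'_0])
  have cb: "continuous_on UNIV (\<lambda>x. u' x * \<phi> x)" by (rule times_continuous[OF cu' c\<phi> C(3)])
  have c\<psi>: "continuous_on UNIV (\<lambda>x. u x * \<phi> x)" by (rule times_continuous[OF cu c\<phi> C(3)])
  have ia: "integrable lborel (\<lambda>x. u x * \<phi>' x)"
    by (rule integrable_lborel_vanishing_outside_cball[OF ca]) (use outside \<phi>'_0 in auto)
  have ib: "integrable lborel (\<lambda>x. u' x * \<phi> x)"
    by (rule integrable_lborel_vanishing_outside_cball[OF cb]) (use outside C(3) in auto)
  have d\<psi>: "((\<lambda>t. u (x + t *\<^sub>R e) * \<phi> (x + t *\<^sub>R e)) has_real_derivative u' x * \<phi> x + u x * \<phi>' x) (at 0)"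
    for x
  proof (cases "x \<in> U")
    case True
    then show ?thesis using DERIV_mult[OF du[OF True] d\<phi>[of x]] by (simp add: algebra_simps)
  next
    case False
    then have "x \<notin> C" using C(2) by auto
    with has_real_derivative_line_outside_closed_support[OF closed_C, of "\<lambda>x. u x * \<phi> x"]
    show ?thesis using C(3) \<phi>'_0 by simp
  qed
  have "integral\<^sup>L lborel (\<lambda>x. u' x * \<phi> x + u x * \<phi>' x) = 0"
    by (rule lborel_integral_directional_derivative_eq_0[OF d\<psi> c\<psi> continuous_on_add[OF cb ca], of R])
      (use outside C(3) \<phi>'_0 in auto)
  then have "integral\<^sup>L lborel (\<lambda>x. u x * \<phi>' x) = - integral\<^sup>L lborel (\<lambda>x. u' x * \<phi> x)"
    using ia ib by simp
  moreover have "(\<lambda>x. u x * \<phi>' x) \<in> borel_measurable lborel" "(\<lambda>x. u' x * \<phi> x) \<in> borel_measurable lborel"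
    using ia ib by (simp_all add: borel_measurable_integrable)
  ultimately show "(\<integral>x. u x * \<phi>' x \<partial>lebesgue) = - (\<integral>x. u' x * \<phi> x \<partial>lebesgue)"
    and "integrable lebesgue (\<lambda>x. u x * \<phi>' x)" and "integrable lebesgue (\<lambda>x. u' x * \<phi> x)"
    using ia ib by (simp_all add: integral_completion integrable_completion)
qed

lemma integral_le_of_abs_le:
  fixes f g :: "'a \<Rightarrow> real"
  assumes g: "integrable M g" and f: "f \<in> borel_measurable M" and le: "AE x in M. \<bar>f x\<bar> \<le> g x"
  shows "integral\<^sup>L M f \<le> integral\<^sup>L M g"
proof (rule integral_mono_AE)
  show "integrable M f"
    by (rule Bochner_Integration.integrable_bound[OF g f]) (use le in \<open>auto elim: eventually_mono\<close>)
  show "AE x in M. f x \<le> g x"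
    using le by eventually_elim auto
qed (fact g)

lemma has_real_derivative_partial_deriv:
  fixes \<phi> :: "real^'n::finite \<Rightarrow> real"
  assumes "\<phi> differentiable (at x)"
  shows "((\<lambda>t. \<phi> (x + t *\<^sub>R axis i 1)) has_real_derivative partial_deriv i \<phi> x) (at 0)"
proof -
  have D: "(\<phi> has_derivative frechet_derivative \<phi> (at x)) (at (x + 0 *\<^sub>R axis i 1))"
    using assms by (simp add: frechet_derivative_works)
  have "((\<lambda>t. x + t *\<^sub>R axis i 1) has_derivative (\<lambda>t. t *\<^sub>R axis i 1)) (at 0)"
    by (auto intro!: derivative_eq_intros)
  from has_derivative_compose[OF this D]
  have "((\<lambda>t. \<phi> (x + t *\<^sub>R axis i 1)) has_derivative (\<lambda>t. frechet_derivative \<phi> (at x) (t *\<^sub>R axis i 1))) (at 0)"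
    by simp
  moreover have "(\<lambda>t. frechet_derivative \<phi> (at x) (t *\<^sub>R axis i 1)) = (*) (partial_deriv i \<phi> x)"
    using has_derivative_linear[OF D] by (auto simp: fun_eq_iff partial_deriv_def linear_scale)
  ultimately show ?thesis
    unfolding has_field_derivative_def by simp
qed

lemma test_fun_differentiable:
  assumes "test_fun U \<phi>"
  shows "\<phi> differentiable_on UNIV" and "partial_deriv i \<phi> differentiable_on UNIV"
proof -
  have "iter_partial is \<phi> differentiable_on UNIV" for "is"
    using assms by (simp add: test_fun_def smooth_def)
  from this[of "[]"] this[of "[i]"] show "\<phi> differentiable_on UNIV" "partial_deriv i \<phi> differentiable_on UNIV"
    by simp_all
qed

lemma zero_outside_closure_support: "x \<notin> closure {x. f x \<noteq> 0} \<Longrightarrow> f x = 0"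
  using closure_subset[of "{x. f x \<noteq> 0}"] by auto

lemma test_fun_integration_by_parts:
  fixes u u' :: "real^'n::finite \<Rightarrow> real"
  assumes \<phi>: "test_fun U \<phi>" and "open U"
    and "\<And>x. x \<in> U \<Longrightarrow> ((\<lambda>t. u (x + t *\<^sub>R axis i 1)) has_real_derivative u' x) (at 0)"
    and "continuous_on U u" and "continuous_on U u'"
  shows "integrable lebesgue (\<lambda>x. u x * partial_deriv i \<phi> x)"
    and "integrable lebesgue (\<lambda>x. u' x * \<phi> x)"
    and "(\<integral>x. u x * partial_deriv i \<phi> x \<partial>lebesgue) = - (\<integral>x. u' x * \<phi> x \<partial>lebesgue)"
proof -
  note differentiable = test_fun_differentiable(1)[OF \<phi>] test_fun_differentiable(2)[OF \<phi>, of i]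
  have "((\<lambda>t. \<phi> (x + t *\<^sub>R axis i 1)) has_real_derivative partial_deriv i \<phi> x) (at 0)" for x
    using differentiable(1) by (intro has_real_derivative_partial_deriv) (simp add: differentiable_on_def)
  moreover have "compact (closure {x. \<phi> x \<noteq> 0})" and "closure {x. \<phi> x \<noteq> 0} \<subseteq> U"
    using \<phi> by (simp_all add: test_fun_def)
  ultimately show "integrable lebesgue (\<lambda>x. u x * partial_deriv i \<phi> x)"
    and "integrable lebesgue (\<lambda>x. u' x * \<phi> x)"
    and "(\<integral>x. u x * partial_deriv i \<phi> x \<partial>lebesgue) = - (\<integral>x. u' x * \<phi> x \<partial>lebesgue)"
    using lebesgue_integration_by_parts_directional[OF assms(2-5) _
        differentiable_imp_continuous_on[OF differentiable(1)]
        differentiable_imp_continuous_on[OF differentiable(2)] _ _ zero_outside_closure_support[where f = \<phi>]]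
    by blast+
qed

lemma test_fun_vanishes_outside: "test_fun U \<phi> \<Longrightarrow> x \<notin> U \<Longrightarrow> \<phi> x = 0"
  using zero_outside_closure_support[of x \<phi>] by (auto simp: test_fun_def)

lemma loc_Lp_continuous:
  fixes u :: "real^'n::finite \<Rightarrow> real"
  assumes "continuous_on U u" and "p > 0"
  shows "loc_Lp U p u"
  unfolding loc_Lp_def
proof (intro allI impI conjI)
  fix K assume K: "compact K \<and> K \<subseteq> U"
  have cK: "continuous_on K u" using assms K by (auto intro: continuous_on_subset)
  have "integrable lborel (\<lambda>x. indicator K x *\<^sub>R u x)"
    using K cK by (intro borel_integrable_compact) auto
  then show "set_borel_measurable lebesgue K u"
    unfolding set_borel_measurable_def by (simp add: borel_measurable_integrable measurable_completion)
  have "integrable lborel (\<lambda>x. indicator K x *\<^sub>R (\<bar>u x\<bar> powr p))"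
    using K cK assms(2) by (intro borel_integrable_compact continuous_on_powr' continuous_intros) auto
  then show "set_integrable lebesgue K (\<lambda>x. \<bar>u x\<bar> powr p)"
    unfolding set_integrable_def by (simp add: borel_measurable_integrable integrable_completion)
qed

section \<open>Radial functions and decay estimates\<close>

lemma has_real_derivative_norm_line:
  fixes x e :: "'a::real_inner"
  assumes "x \<noteq> 0"
  shows "((\<lambda>t. norm (x + t *\<^sub>R e)) has_real_derivative (x \<bullet> e / norm x)) (at 0)"
proof -
  have line: "((\<lambda>t. x + t *\<^sub>R e) has_derivative (\<lambda>t. t *\<^sub>R e)) (at 0)"
    by (auto intro!: derivative_eq_intros)
  have "(norm has_derivative (\<lambda>h. h \<bullet> sgn x)) (at (x + 0 *\<^sub>R e))"
    using has_derivative_norm[OF assms] by simp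
  from has_derivative_compose[OF line this]
  have "((\<lambda>t. norm (x + t *\<^sub>R e)) has_derivative (\<lambda>t. (t *\<^sub>R e) \<bullet> sgn x)) (at 0)"
    by simp
  moreover have "(\<lambda>t. (t *\<^sub>R e) \<bullet> sgn x) = (*) (x \<bullet> e / norm x)"
    by (auto simp: fun_eq_iff sgn_div_norm inner_commute field_simps)
  ultimately show ?thesis unfolding has_field_derivative_def by simp
qed

lemma has_real_derivative_radial_line:
  fixes x e :: "'a::real_inner"
  assumes "x \<noteq> 0" and "(F has_real_derivative F') (at (norm x))"
  shows "((\<lambda>t. F (norm (x + t *\<^sub>R e))) has_real_derivative F' * (x \<bullet> e / norm x)) (at 0)"
  using DERIV_chain2[OF _ has_real_derivative_norm_line[OF assms(1)]] assms(2) by simp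

lemma isCont_radial:
  fixes x :: "'a::real_normed_vector"
  assumes "isCont G (norm x)"
  shows "isCont (\<lambda>x. G (norm x)) x"
  by (rule isCont_o2[where f = norm, OF _ assms]) (auto intro: continuous_intros)

lemma continuous_on_radial_times:
  fixes h :: "'a::real_normed_vector \<Rightarrow> real"
  assumes "\<And>r. r > 0 \<Longrightarrow> isCont G r" and "continuous_on UNIV h"
  shows "continuous_on (- {0}) (\<lambda>x. G (norm x) * h x)"
proof (rule continuous_at_imp_continuous_on, intro ballI)
  fix x :: 'a assume "x \<in> - {0}"
  then have "isCont (\<lambda>x. G (norm x)) x" by (intro isCont_radial assms(1)) simp
  moreover have "isCont h x" using assms(2) by (simp add: continuous_on_eq_continuous_at)
  ultimately show "isCont (\<lambda>x. G (norm x) * h x) x" by (intro continuous_intros)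
qed

lemma one_plus_power2_pos: "0 < 1 + (x::real)\<^sup>2"
  by (simp add: add_pos_nonneg)

lemma powr_neg_le_bracket:
  fixes r e :: real
  assumes "1 \<le> r" and "0 \<le> e"
  shows "r powr (- e) \<le> 2 powr (e / 2) * (1 + r\<^sup>2) powr (- e / 2)"
proof -
  have "r\<^sup>2 = r powr 2" using assms(1) powr_realpow[of r 2] by simp
  then have "r powr (- e) = (r\<^sup>2) powr (- e / 2)"
    by (simp only: powr_powr) simp
  also have "\<dots> = 2 powr (e / 2) * (2 * r\<^sup>2) powr (- e / 2)"
    using assms(1) by (simp add: powr_mult powr_minus field_simps)
  also have "\<dots> \<le> 2 powr (e / 2) * (1 + r\<^sup>2) powr (- e / 2)"
    using assms one_le_power[OF assms(1), of 2]
    by (intro mult_left_mono powr_mono2') (auto intro: one_plus_power2_pos)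
  finally show ?thesis .
qed

lemma decay_imp_bracket_bound:
  fixes f :: "'a::real_normed_vector \<Rightarrow> real"
  assumes bounded: "AE x in M. \<bar>f x\<bar> \<le> B"
    and decay: "\<And>x. norm x \<ge> R \<Longrightarrow> \<bar>f x\<bar> \<le> Cf * norm x powr (- e)"
    and "e \<ge> 0" and "Cf > 0"
  obtains C where "C > 0" and "AE x in M. \<bar>f x\<bar> \<le> C * (1 + (norm x)\<^sup>2) powr (- e / 2)"
proof
  define R1 where "R1 = max R 1"
  define B' where "B' = max B 0"
  show "B' * (1 + R1\<^sup>2) powr (e / 2) + Cf * 2 powr (e / 2) > 0"
    using assms(4) by (intro add_nonneg_pos) (auto simp: B'_def)
  show "AE x in M. \<bar>f x\<bar> \<le> (B' * (1 + R1\<^sup>2) powr (e / 2) + Cf * 2 powr (e / 2)) * (1 + (norm x)\<^sup>2) powr (- e / 2)"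
    using bounded
  proof eventually_elim
    case (elim x)
    have near: "0 \<le> B' * (1 + R1\<^sup>2) powr (e / 2) * (1 + (norm x)\<^sup>2) powr (- e / 2)"
      by (simp add: B'_def)
    have far: "0 \<le> Cf * 2 powr (e / 2) * (1 + (norm x)\<^sup>2) powr (- e / 2)"
      using assms(4) by simp
    show ?case
    proof (cases "norm x \<ge> R1")
      case True
      then have "\<bar>f x\<bar> \<le> Cf * norm x powr (- e)" using decay by (simp add: R1_def)
      also have "\<dots> \<le> Cf * (2 powr (e / 2) * (1 + (norm x)\<^sup>2) powr (- e / 2))"
        using True assms(3,4) by (intro mult_left_mono powr_neg_le_bracket) (auto simp: R1_def)
      finally show ?thesis using near by (simp add: distrib_right mult.assoc)
    next
      case False
      have "\<bar>f x\<bar> \<le> B' * (1 + R1\<^sup>2) powr (e / 2) * (1 + R1\<^sup>2) powr (- e / 2)"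
        using elim one_plus_power2_pos[of R1] by (simp add: B'_def powr_minus field_simps)
      also have "\<dots> \<le> B' * (1 + R1\<^sup>2) powr (e / 2) * (1 + (norm x)\<^sup>2) powr (- e / 2)"
        using False assms(3) one_plus_power2_pos[of "norm x"]
        by (intro mult_left_mono powr_mono2') (auto simp: B'_def intro!: power_mono)
      finally show ?thesis using far by (simp add: distrib_right)
    qed
  qed
qed

section \<open>Inverting the flux t^(p-1) A(t)\<close>

locale admissible_coefficient =
  fixes p \<delta> L :: real and A :: "real \<Rightarrow> real"
  assumes p_gt_1: "p > 1" and delta_pos: "\<delta> > 0"
    and A_bounds: "\<And>t. t \<ge> 0 \<Longrightarrow> \<delta> \<le> A t \<and> A t \<le> L"
    and A_continuous: "continuous_on {0..} A"
    and strict_mono_flux: "strict_mono_on {0<..} (\<lambda>t. t powr (p - 1) * A t)"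
begin

definition flux :: "real \<Rightarrow> real" where
  "flux t = t powr (p - 1) * A t"

definition flux_inv :: "real \<Rightarrow> real" where
  "flux_inv y = (SOME t. t > 0 \<and> flux t = y)"

lemma L_pos: "L > 0"
  using A_bounds[of 0] delta_pos by linarith

lemma flux_bounds: "t > 0 \<Longrightarrow> \<delta> * t powr (p - 1) \<le> flux t \<and> flux t \<le> L * t powr (p - 1)"
  using A_bounds[of t] unfolding flux_def by (auto intro: mult_left_mono simp: mult.commute)

lemma flux_pos: "t > 0 \<Longrightarrow> flux t > 0"
  using flux_bounds[of t] delta_pos by (smt (verit) mult_pos_pos powr_gt_zero)

lemma flux_less: "0 < s \<Longrightarrow> s < t \<Longrightarrow> flux s < flux t"
  using strict_mono_flux unfolding strict_mono_on_def flux_def by auto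

lemma flux_le_iff: "s > 0 \<Longrightarrow> t > 0 \<Longrightarrow> flux s \<le> flux t \<longleftrightarrow> s \<le> t"
  using flux_less[of s t] flux_less[of t s] by (cases s t rule: linorder_cases) auto

lemma continuous_on_flux: "continuous_on {0<..} flux"
proof -
  have "continuous_on {0<..} A" using A_continuous by (rule continuous_on_subset) auto
  then show ?thesis unfolding flux_def by (auto intro!: continuous_intros)
qed

lemma scaled_root_powr:
  assumes "y > 0" and "c > 0"
  shows "c * ((y / c) powr (1 / (p - 1))) powr (p - 1) = y"
  using assms p_gt_1 by (simp add: powr_powr)

lemma flux_le_at_L_root: "y > 0 \<Longrightarrow> flux ((y / L) powr (1 / (p - 1))) \<le> y"
  using flux_bounds[of "(y / L) powr (1 / (p - 1))"] scaled_root_powr[of y L] L_pos by simp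

lemma flux_ge_at_delta_root: "y > 0 \<Longrightarrow> y \<le> flux ((y / \<delta>) powr (1 / (p - 1)))"
  using flux_bounds[of "(y / \<delta>) powr (1 / (p - 1))"] scaled_root_powr[of y \<delta>] delta_pos by simp

lemma flux_surj: assumes "y > 0" shows "\<exists>t > 0. flux t = y"
proof -
  define t1 where "t1 = (y / L) powr (1 / (p - 1))"
  define t2 where "t2 = (y / \<delta>) powr (1 / (p - 1))"
  have t_pos: "t1 > 0" "t2 > 0"
    using assms L_pos delta_pos by (auto simp: t1_def t2_def)
  have below: "flux t1 \<le> y" and above: "y \<le> flux t2"
    unfolding t1_def t2_def using assms by (rule flux_le_at_L_root, rule flux_ge_at_delta_root)
  then have "t1 \<le> t2" using flux_le_iff t_pos by fastforce
  moreover have "continuous_on {t1..t2} flux"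
    by (rule continuous_on_subset[OF continuous_on_flux]) (use t_pos in auto)
  ultimately obtain t where "t1 \<le> t" "flux t = y"
    using IVT'[of flux t1 y t2] below above by auto
  then show ?thesis using t_pos by (intro exI[of _ t]) auto
qed

lemma flux_inv: "y > 0 \<Longrightarrow> flux_inv y > 0 \<and> flux (flux_inv y) = y"
  unfolding flux_inv_def by (rule someI_ex) (use flux_surj in blast)

lemma flux_inv_flux: "t > 0 \<Longrightarrow> flux_inv (flux t) = t"
  using flux_inv[OF flux_pos] flux_le_iff by (metis order_antisym order_refl)

lemma flux_inv_le_iff: "y > 0 \<Longrightarrow> t > 0 \<Longrightarrow> flux_inv y \<le> t \<longleftrightarrow> y \<le> flux t"
  using flux_inv flux_le_iff by metis

lemma le_flux_inv_iff: "y > 0 \<Longrightarrow> t > 0 \<Longrightarrow> t \<le> flux_inv y \<longleftrightarrow> flux t \<le> y"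
  using flux_inv flux_le_iff by metis

lemma flux_inv_mono: "0 < y1 \<Longrightarrow> y1 \<le> y2 \<Longrightarrow> flux_inv y1 \<le> flux_inv y2"
  using flux_inv[of y1] flux_inv[of y2] flux_inv_le_iff by simp

lemma flux_inv_lower: "y > 0 \<Longrightarrow> (y / L) powr (1 / (p - 1)) \<le> flux_inv y"
  using le_flux_inv_iff flux_le_at_L_root L_pos by simp

lemma flux_inv_upper: "y > 0 \<Longrightarrow> flux_inv y \<le> (y / \<delta>) powr (1 / (p - 1))"
  using flux_inv_le_iff flux_ge_at_delta_root delta_pos by simp

lemma isCont_flux_inv: assumes "y > 0" shows "isCont flux_inv y"
proof -
  define t where "t = flux_inv y"
  have t: "t > 0" "flux t = y" using flux_inv[OF assms] by (auto simp: t_def)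
  have "isCont flux_inv (flux t)"
  proof (rule isCont_inverse_function[where d = "t / 2" and f = flux and g = flux_inv])
    show "0 < t / 2" using t by simp
    fix s assume "\<bar>s - t\<bar> \<le> t / 2"
    then have s: "s > 0" using t by linarith
    then show "flux_inv (flux s) = s" by (rule flux_inv_flux)
    show "isCont flux s"
      using continuous_on_interior[OF continuous_on_flux] s by (simp add: interior_open)
  qed
  then show ?thesis using t by simp
qed

end

section \<open>The radial profiles\<close>

locale radial_profile = admissible_coefficient +
  fixes n K \<beta> :: real
  assumes n_ge_2: "2 \<le> n" and n_less_p: "n < p" and K_pos: "K > 0"
    and beta_large: "p - n < 2 * \<beta>"
begin

definition \<gamma> :: real where
  "\<gamma> = (n - 1) / (p - 1)"

definition \<Phi> :: "real \<Rightarrow> real \<Rightarrow> real" where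
  "\<Phi> a s = L * a powr (p - 1) + K * (1 + s\<^sup>2) powr (- \<beta>)"

definition slope :: "real \<Rightarrow> real \<Rightarrow> real" where
  "slope a s = (if s > 0 then flux_inv (\<Phi> a s / s powr (n - 1)) else 0)"

definition profile :: "real \<Rightarrow> real \<Rightarrow> real" where
  "profile a r = integral {0..r} (slope a)"

lemma beta_pos: "\<beta> > 0"
  using beta_large n_less_p by linarith

lemma gamma_bounds: "0 \<le> \<gamma>" "\<gamma> < 1"
  using n_ge_2 n_less_p p_gt_1 by (auto simp: \<gamma>_def)

lemma one_minus_gamma: "1 - \<gamma> = (p - n) / (p - 1)"
  using p_gt_1 by (simp add: \<gamma>_def field_simps)

lemma \<Phi>_pos: "a \<ge> 0 \<Longrightarrow> \<Phi> a s > 0"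
  unfolding \<Phi>_def using L_pos K_pos one_plus_power2_pos[of s]
  by (intro add_nonneg_pos mult_nonneg_nonneg mult_pos_pos) auto

lemma \<Phi>_bounds: "L * a powr (p - 1) \<le> \<Phi> a s" "\<Phi> a s \<le> L * a powr (p - 1) + K"
proof -
  have "1 \<le> (1 + s\<^sup>2) powr \<beta>"
    using beta_pos by (intro ge_one_powr_ge_zero) auto
  then have "(1 + s\<^sup>2) powr (- \<beta>) \<le> 1"
    by (simp add: powr_minus_divide divide_le_eq_1)
  then show "\<Phi> a s \<le> L * a powr (p - 1) + K"
    unfolding \<Phi>_def using K_pos by simp
qed (use K_pos in \<open>simp add: \<Phi>_def\<close>)

lemma \<Phi>_0_le: assumes "s > 0" shows "\<Phi> 0 s \<le> K * s powr (- (2 * \<beta>))"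
proof -
  have "(1 + s\<^sup>2) powr (- \<beta>) \<le> (s\<^sup>2) powr (- \<beta>)"
    using assms beta_pos by (intro powr_mono2') auto
  also have "(s\<^sup>2) powr (- \<beta>) = s powr (- (2 * \<beta>))"
  proof -
    have "s\<^sup>2 = s powr 2" using assms powr_realpow[of s 2] by simp
    then show ?thesis by (simp only: powr_powr) simp
  qed
  finally show ?thesis unfolding \<Phi>_def using K_pos p_gt_1 by simp
qed

lemma flux_slope:
  assumes "a \<ge> 0" and "s > 0"
  shows "slope a s > 0" and "flux (slope a s) = \<Phi> a s / s powr (n - 1)"
  using flux_inv[of "\<Phi> a s / s powr (n - 1)"] \<Phi>_pos[OF assms(1)] assms(2)
  by (simp_all add: slope_def)

lemma slope_nonneg: "a \<ge> 0 \<Longrightarrow> slope a s \<ge> 0"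
  using flux_slope(1)[of a s] by (cases "s > 0") (auto simp: slope_def)

lemma slope_le_if_\<Phi>_le:
  assumes "a \<ge> 0" and "s > 0" and \<Phi>_le: "\<Phi> a s \<le> c * s powr (- e)"
  shows "slope a s \<le> (c / \<delta>) powr (1 / (p - 1)) * s powr (- (e + n - 1) / (p - 1))"
proof -
  define y where "y = \<Phi> a s / s powr (n - 1)"
  have y: "y > 0" using \<Phi>_pos[OF assms(1)] assms(2) by (simp add: y_def)
  have c: "c > 0"
    using \<Phi>_pos[OF assms(1), of s] \<Phi>_le assms(2) by (smt (verit) mult_nonpos_nonneg powr_ge_zero)
  have "y = \<Phi> a s * s powr (- (n - 1))"
    unfolding y_def powr_minus by (simp add: divide_inverse)
  also have "\<dots> \<le> c * s powr (- e) * s powr (- (n - 1))"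
    by (rule mult_right_mono[OF \<Phi>_le]) simp
  also have "\<dots> = c * s powr (- (e + n - 1))"
    by (simp add: mult.assoc powr_add[symmetric] algebra_simps)
  finally have y_le: "y / \<delta> \<le> c / \<delta> * s powr (- (e + n - 1))"
    using delta_pos by (simp add: divide_right_mono)
  have "slope a s = flux_inv y" using assms(2) by (simp add: slope_def y_def)
  also have "\<dots> \<le> (y / \<delta>) powr (1 / (p - 1))" by (rule flux_inv_upper[OF y])
  also have "\<dots> \<le> (c / \<delta> * s powr (- (e + n - 1))) powr (1 / (p - 1))"
    using y_le y delta_pos p_gt_1 by (intro powr_mono2) auto
  also have "\<dots> = (c / \<delta>) powr (1 / (p - 1)) * s powr (- (e + n - 1) / (p - 1))"
    using c delta_pos assms(2) by (subst powr_mult) (simp_all add: powr_powr)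
  finally show ?thesis .
qed

lemma slope_upper:
  assumes "a \<ge> 0" and "s > 0"
  shows "slope a s \<le> ((L * a powr (p - 1) + K) / \<delta>) powr (1 / (p - 1)) * s powr (- \<gamma>)"
  using slope_le_if_\<Phi>_le[OF assms, of "L * a powr (p - 1) + K" 0] \<Phi>_bounds(2)[of a s] assms(2)
  by (simp add: \<gamma>_def minus_divide_left)

lemma slope_0_upper:
  assumes "s > 0"
  shows "slope 0 s \<le> (K / \<delta>) powr (1 / (p - 1)) * s powr (- (2 * \<beta> + n - 1) / (p - 1))"
  using slope_le_if_\<Phi>_le[OF _ assms \<Phi>_0_le[OF assms]] by simp

lemma slope_lower:
  assumes "a \<ge> 0" and "s > 0"
  shows "a * s powr (- \<gamma>) \<le> slope a s"
proof -
  define y where "y = \<Phi> a s / s powr (n - 1)"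
  have y: "y > 0" using \<Phi>_pos[OF assms(1)] assms(2) by (simp add: y_def)
  have "a * s powr (- \<gamma>) = (a powr (p - 1) * s powr (- (n - 1))) powr (1 / (p - 1))"
    using assms p_gt_1 by (simp add: powr_mult powr_powr \<gamma>_def minus_divide_left)
  also have "\<dots> \<le> (y / L) powr (1 / (p - 1))"
    using \<Phi>_bounds(1)[of a s] assms L_pos p_gt_1
    by (intro powr_mono2) (auto simp: y_def powr_minus_divide field_simps powr_add[symmetric])
  also have "\<dots> \<le> flux_inv y" by (rule flux_inv_lower[OF y])
  finally show ?thesis using assms(2) by (simp add: slope_def y_def)
qed

lemma slope_mono:
  assumes "0 \<le> a" and "a \<le> a'"
  shows "slope a s \<le> slope a' s"
proof (cases "s > 0")
  case True
  have "\<Phi> a s \<le> \<Phi> a' s"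
    using assms p_gt_1 L_pos by (auto simp: \<Phi>_def intro!: powr_mono2)
  then have "\<Phi> a s / s powr (n - 1) \<le> \<Phi> a' s / s powr (n - 1)"
    by (simp add: divide_right_mono)
  then show ?thesis
    using True assms \<Phi>_pos[OF assms(1), of s] by (auto simp: slope_def intro!: flux_inv_mono)
qed (simp add: slope_def)

lemma isCont_slope:
  assumes "a \<ge> 0" and "s > 0"
  shows "isCont (slope a) s"
proof -
  have "isCont (\<lambda>s. \<Phi> a s / s powr (n - 1)) s"
    using assms(2) one_plus_power2_pos[of s] unfolding \<Phi>_def by (auto intro!: continuous_intros)
  then have "isCont (\<lambda>s. flux_inv (\<Phi> a s / s powr (n - 1))) s"
    by (rule isCont_o2) (use isCont_flux_inv \<Phi>_pos[OF assms(1)] assms(2) in simp)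
  moreover have "\<forall>\<^sub>F x in nhds s. slope a x = flux_inv (\<Phi> a x / x powr (n - 1))"
    using eventually_nhds_in_open[of "{0<..}" s] assms(2)
    by (auto simp: slope_def elim!: eventually_mono)
  ultimately show ?thesis using isCont_cong by metis
qed

lemma slope_tendsto:
  assumes "s > 0" and "X \<longlonglongrightarrow> 0" and "\<And>m. X m \<ge> 0"
  shows "(\<lambda>m. slope (X m) s) \<longlonglongrightarrow> slope 0 s"
proof -
  have "(\<lambda>m. X m powr (p - 1)) \<longlonglongrightarrow> 0"
    using assms p_gt_1 by (intro tendsto_zero_powrI[OF assms(2) tendsto_const]) auto
  then have "(\<lambda>m. L * X m powr (p - 1) + K * (1 + s\<^sup>2) powr (- \<beta>)) \<longlonglongrightarrow> L * 0 + K * (1 + s\<^sup>2) powr (- \<beta>)"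
    by (intro tendsto_intros)
  then have "(\<lambda>m. \<Phi> (X m) s / s powr (n - 1)) \<longlonglongrightarrow> \<Phi> 0 s / s powr (n - 1)"
    unfolding \<Phi>_def using assms(1) by (intro tendsto_divide tendsto_const) auto
  moreover have "isCont flux_inv (\<Phi> 0 s / s powr (n - 1))"
    using isCont_flux_inv \<Phi>_pos assms(1) by simp
  ultimately show ?thesis
    using isCont_tendsto_compose assms(1) by (fastforce simp: slope_def)
qed

lemma slope_integrable: assumes "a \<ge> 0" shows "slope a integrable_on {0..r}"
proof (cases "r \<ge> 0")
  case True
  define C where "C = ((L * a powr (p - 1) + K) / \<delta>) powr (1 / (p - 1))"
  have "{0..r} = insert 0 {0<..r}" using True by auto
  moreover have "slope a absolutely_integrable_on {0<..r}"
  proof (rule measurable_bounded_by_integrable_imp_absolutely_integrable)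
    show "slope a \<in> borel_measurable (lebesgue_on {0<..r})"
      by (rule continuous_imp_measurable_on_sets_lebesgue)
        (auto intro!: continuous_at_imp_continuous_on isCont_slope assms)
    have "(\<lambda>s. C * s powr (- \<gamma>)) integrable_on {0..r}"
      using integrable_on_powr_from_0[of "- \<gamma>" r] gamma_bounds True
      by (auto intro: integrable_on_mult_right)
    then show "(\<lambda>s. C * s powr (- \<gamma>)) integrable_on {0<..r}"
      using \<open>{0..r} = insert 0 {0<..r}\<close> by (metis integrable_on_insert_iff)
    show "norm (slope a s) \<le> C * s powr (- \<gamma>)" if "s \<in> {0<..r}" for s
      using slope_upper[of a s] slope_nonneg[of a s] assms that by (simp add: C_def)
  qed simp
  ultimately show ?thesis
    by (metis absolutely_integrable_on_def integrable_on_insert_iff)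
qed auto

lemma has_real_derivative_profile:
  assumes "a \<ge> 0" and "r > 0"
  shows "(profile a has_real_derivative slope a r) (at r)"
proof -
  have "((\<lambda>u. integral {0..u} (slope a)) has_vector_derivative slope a r) (at r within {0..2 * r} - {})"
    using assms by (intro integral_has_vector_derivative_continuous_at[OF slope_integrable])
      (auto intro: continuous_at_imp_continuous_at_within isCont_slope)
  moreover have "at r within {0..2 * r} - {} = at r"
    using assms by (intro at_within_interior) (simp add: interior_atLeastAtMost_real)
  ultimately show ?thesis
    by (simp add: profile_def[abs_def] has_real_derivative_iff_has_vector_derivative)
qed

lemma profile_mono:
  assumes "a \<ge> 0" and "0 \<le> r" and "r \<le> r'"
  shows "profile a r \<le> profile a r'"
  unfolding profile_def
  by (rule integral_subset_le) (use assms in \<open>auto intro: slope_integrable slope_nonneg\<close>)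

lemma profile_nonneg: "a \<ge> 0 \<Longrightarrow> profile a r \<ge> 0"
  unfolding profile_def by (rule integral_nonneg[OF slope_integrable]) (auto intro: slope_nonneg)

lemma profile_lower:
  assumes "a \<ge> 0" and "r \<ge> 0"
  shows "a * r powr ((p - n) / (p - 1)) \<le> profile a r"
proof -
  have "((\<lambda>s. a * s powr (- \<gamma>)) has_integral (a * (r powr (1 - \<gamma>) / (1 - \<gamma>)))) {0..r}"
    using has_integral_powr_from_0[of "- \<gamma>" r] gamma_bounds assms
    by (intro has_integral_mult_right) (auto simp: add.commute)
  moreover have "(slope a has_integral profile a r) {0..r}"
    unfolding profile_def using slope_integrable[OF assms(1)] by (rule integrable_integral)
  ultimately have "a * (r powr (1 - \<gamma>) / (1 - \<gamma>)) \<le> profile a r"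
    by (rule has_integral_le) (use assms slope_lower slope_nonneg in \<open>force simp: le_less\<close>)
  moreover have "a * r powr (1 - \<gamma>) \<le> a * (r powr (1 - \<gamma>) / (1 - \<gamma>))"
    using assms gamma_bounds by (intro mult_left_mono) (auto simp: le_divide_eq intro!: mult_left_le)
  ultimately show ?thesis by (simp add: one_minus_gamma)
qed

lemma profile_unbounded:
  assumes "a > 0"
  shows "\<not> bdd_above (profile a ` {0<..})"
proof
  assume "bdd_above (profile a ` {0<..})"
  then obtain B where B: "\<And>r. r > 0 \<Longrightarrow> profile a r \<le> B" by (auto simp: bdd_above_def)
  define r where "r = ((\<bar>B\<bar> + 1) / a) powr ((p - 1) / (p - n))"
  have r: "r > 0" using assms by (simp add: r_def)
  have "a * r powr ((p - n) / (p - 1)) = \<bar>B\<bar> + 1"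
    using assms n_less_p p_gt_1 by (simp add: r_def powr_powr)
  then show False using profile_lower[of a r] B[OF r] assms r by simp
qed

lemma integral_slope_0_tail_le:
  assumes "1 \<le> r"
  shows "integral {1..r} (slope 0) \<le> (K / \<delta>) powr (1 / (p - 1)) / ((2 * \<beta> + n - 1) / (p - 1) - 1)"
proof -
  define C where "C = (K / \<delta>) powr (1 / (p - 1))"
  define \<mu> where "\<mu> = (2 * \<beta> + n - 1) / (p - 1) - 1"
  define e where "e = - (2 * \<beta> + n - 1) / (p - 1)"
  have e: "e + 1 = - \<mu>" "e < - 1" and \<mu>: "\<mu> > 0"
    using beta_large p_gt_1 by (simp_all add: e_def \<mu>_def field_simps)
  have "((\<lambda>s. C * s powr e) has_integral C * (- (1 powr (e + 1)) / (e + 1))) {1..}"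
    using e by (intro has_integral_mult_right has_integral_powr_to_inf) auto
  then have tail: "((\<lambda>s. C * s powr e) has_integral C / \<mu>) {1..}"
    using e by simp
  have "integral {1..r} (slope 0) \<le> integral {1..r} (\<lambda>s. C * s powr e)"
    by (rule integral_le)
      (use slope_0_upper integrable_subinterval_real[OF slope_integrable[of 0 r]] in
        \<open>auto simp: C_def e_def intro!: integrable_continuous_interval continuous_intros\<close>)
  also have "\<dots> \<le> integral {1..} (\<lambda>s. C * s powr e)"
    using tail by (intro integral_subset_le)
      (auto simp: C_def intro!: integrable_continuous_interval continuous_intros)
  also have "\<dots> = C / \<mu>"
    using tail by (rule integral_unique)
  finally show ?thesis by (simp add: C_def \<mu>_def)
qed

lemma profile_0_bounded: "\<exists>C > 0. \<forall>r > 0. profile 0 r \<le> C"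
proof -
  define T where "T = (K / \<delta>) powr (1 / (p - 1)) / ((2 * \<beta> + n - 1) / (p - 1) - 1)"
  have "(2 * \<beta> + n - 1) / (p - 1) > 1"
    using beta_large p_gt_1 by (simp add: less_divide_eq_1_pos)
  then have T: "T \<ge> 0" by (simp add: T_def)
  have "profile 0 r \<le> profile 0 1 + T + 1" if r: "r > 0" for r
  proof (cases "r \<le> 1")
    case True
    then show ?thesis using profile_mono[of 0 r 1] r T by simp
  next
    case False
    have "profile 0 r = profile 0 1 + integral {1..r} (slope 0)"
      unfolding profile_def using False slope_integrable[of 0 r]
      by (simp add: Henstock_Kurzweil_Integration.integral_combine)
    then show ?thesis using integral_slope_0_tail_le[of r] False by (simp add: T_def)
  qed
  moreover have "profile 0 1 + T + 1 > 0"
    using profile_nonneg[of 0 1] T by simp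
  ultimately show ?thesis by blast
qed

lemma profile_tendsto:
  assumes "r > 0"
  shows "((\<lambda>a. profile a r) \<longlongrightarrow> profile 0 r) (at_right 0)"
proof (rule tendsto_at_right_sequentially[of 0 1])
  fix X :: "nat \<Rightarrow> real"
  assume X: "\<And>m. 0 < X m" "\<And>m. X m < 1" "X \<longlonglongrightarrow> 0"
  have "(\<lambda>m. integral {0..r} (slope (X m))) \<longlonglongrightarrow> integral {0..r} (slope 0)"
  proof (rule dominated_convergence(2))
    show "slope (X m) integrable_on {0..r}" for m
      using X(1)[of m] by (intro slope_integrable) simp
    show "slope 1 integrable_on {0..r}" by (intro slope_integrable) simp
    show "norm (slope (X m) s) \<le> slope 1 s" for m s
      using slope_nonneg[of "X m" s] slope_mono[of "X m" 1 s] X(1,2)[of m] by simp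
    show "(\<lambda>m. slope (X m) s) \<longlonglongrightarrow> slope 0 s" for s
      using slope_tendsto[of s X] X by (cases "s > 0") (auto simp: slope_def less_imp_le)
  qed
  then show "(\<lambda>m. profile (X m) r) \<longlonglongrightarrow> profile 0 r" by (simp add: profile_def)
qed simp

section \<open>The radial flux and the supersolution inequality\<close>

definition \<Psi> :: "real \<Rightarrow> real \<Rightarrow> real" where
  "\<Psi> a r = \<Phi> a r * r powr (- n)"

definition profile_grad :: "real \<Rightarrow> 'v::real_normed_vector \<Rightarrow> 'v" where
  "profile_grad a x = (slope a (norm x) / norm x) *\<^sub>R x"

lemma flux_of_profile_grad:
  fixes x d :: "'v::real_inner"
  assumes "a \<ge> 0"
  shows "norm (profile_grad a x) powr (p - 2) * A (norm (profile_grad a x)) * (profile_grad a x \<bullet> d)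
    = \<Psi> a (norm x) * (x \<bullet> d)"
  (is "norm ?g powr (p - 2) * A (norm ?g) * (?g \<bullet> d) = _")
proof (cases "x = 0")
  case False
  define r where "r = norm x"
  define w where "w = slope a r"
  have r: "r > 0" using False by (simp add: r_def)
  have w: "w > 0" using flux_slope(1)[OF assms(1) r] by (simp add: w_def)
  have "norm ?g = w" using r w by (simp add: profile_grad_def r_def[symmetric] w_def[symmetric])
  then have "norm ?g powr (p - 2) * A (norm ?g) * (?g \<bullet> d) = (w powr (p - 2) * w) * A w / r * (x \<bullet> d)"
    by (simp add: profile_grad_def r_def w_def)
  also have "\<dots> = flux w / r * (x \<bullet> d)"
    using w powr_add[of w "p - 2" 1] by (simp add: flux_def)
  also have "\<dots> = \<Phi> a r / (r powr (n - 1) * r) * (x \<bullet> d)"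
    using flux_slope(2)[OF assms(1) r] by (simp add: w_def)
  also have "\<dots> = \<Psi> a (norm x) * (x \<bullet> d)"
    using r powr_add[of r "n - 1" 1] by (simp add: \<Psi>_def r_def powr_minus_divide)
  finally show ?thesis .
qed (simp add: profile_grad_def)

definition d\<Phi> :: "real \<Rightarrow> real" where
  "d\<Phi> r = - 2 * \<beta> * K * r * (1 + r\<^sup>2) powr (- \<beta> - 1)"

definition d\<Psi> :: "real \<Rightarrow> real \<Rightarrow> real" where
  "d\<Psi> a r = d\<Phi> r * r powr (- n) - n * \<Phi> a r * r powr (- n - 1)"

lemma has_real_derivative_\<Phi>: "(\<Phi> a has_real_derivative d\<Phi> r) (at r)"
proof -
  have "((\<lambda>r. L * a powr (p - 1) + K * (1 + r\<^sup>2) powr (- \<beta>)) has_real_derivative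
      0 + K * ((- \<beta>) * (1 + r\<^sup>2) powr (- \<beta> - 1) * (0 + 2 * r))) (at r)"
    using one_plus_power2_pos[of r] by (intro derivative_intros DERIV_powr) (auto intro!: derivative_eq_intros)
  then show ?thesis unfolding \<Phi>_def[abs_def] d\<Phi>_def by (simp add: algebra_simps)
qed

lemma has_real_derivative_\<Psi>: "r > 0 \<Longrightarrow> (\<Psi> a has_real_derivative d\<Psi> a r) (at r)"
  unfolding \<Psi>_def[abs_def] d\<Psi>_def
  by (auto intro!: derivative_eq_intros has_real_derivative_\<Phi> simp: algebra_simps)

lemma isCont_d\<Psi>: "r > 0 \<Longrightarrow> isCont (d\<Psi> a) r"
  using one_plus_power2_pos[of r] unfolding d\<Psi>_def d\<Phi>_def \<Phi>_def by (auto intro!: continuous_intros)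

lemma radial_divergence:
  assumes "r > 0"
  shows "r * d\<Psi> a r + n * \<Psi> a r = d\<Phi> r * r powr (1 - n)"
proof -
  have "r * d\<Psi> a r + n * \<Psi> a r
      = d\<Phi> r * (r * r powr (- n)) - n * \<Phi> a r * (r * r powr (- n - 1)) + n * \<Phi> a r * r powr (- n)"
    by (simp add: d\<Psi>_def \<Psi>_def algebra_simps)
  also have "\<dots> = d\<Phi> r * r powr (1 - n)"
    using assms powr_add[of r 1 "- n"] powr_add[of r 1 "- n - 1"] by simp
  finally show ?thesis .
qed

lemma neg_radial_divergence_lower:
  assumes "r > 0"
  shows "2 * \<beta> * K * (1 + r\<^sup>2) powr (- \<beta> - n / 2) \<le> - (d\<Phi> r * r powr (1 - n))"
proof -
  have "(1 + r\<^sup>2) powr ((2 - n) / 2) \<le> (r\<^sup>2) powr ((2 - n) / 2)"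
    using assms n_ge_2 by (intro powr_mono2') auto
  also have "(r\<^sup>2) powr ((2 - n) / 2) = r powr (2 - n)"
  proof -
    have "r\<^sup>2 = r powr 2" using powr_realpow[of r 2] assms by simp
    moreover have "2 * ((2 - n) / 2) = 2 - n" by simp
    ultimately show ?thesis by (simp only: powr_powr)
  qed
  finally have bracket_le: "(1 + r\<^sup>2) powr ((2 - n) / 2) \<le> r powr (2 - n)" .
  have "- \<beta> - n / 2 = (- \<beta> - 1) + (2 - n) / 2" by (simp add: field_simps)
  then have "2 * \<beta> * K * (1 + r\<^sup>2) powr (- \<beta> - n / 2)
      = 2 * \<beta> * K * ((1 + r\<^sup>2) powr (- \<beta> - 1) * (1 + r\<^sup>2) powr ((2 - n) / 2))"
    by (simp only: powr_add)
  also have "\<dots> \<le> 2 * \<beta> * K * ((1 + r\<^sup>2) powr (- \<beta> - 1) * r powr (2 - n))"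
    using bracket_le beta_pos K_pos by (intro mult_left_mono) auto
  also have "\<dots> = 2 * \<beta> * K * ((1 + r\<^sup>2) powr (- \<beta> - 1) * (r * r powr (1 - n)))"
    using assms powr_add[of r 1 "1 - n"] by simp
  also have "\<dots> = - (d\<Phi> r * r powr (1 - n))"
    by (simp add: d\<Phi>_def algebra_simps)
  finally show ?thesis .
qed


lemma has_real_derivative_profile_line:
  fixes x :: "real^'n::finite"
  assumes "a \<ge> 0" and "x \<noteq> 0"
  shows "((\<lambda>t. profile a (norm (x + t *\<^sub>R axis i 1))) has_real_derivative profile_grad a x $ i) (at 0)"
  using has_real_derivative_radial_line[OF assms(2) has_real_derivative_profile[OF assms(1)], of "axis i 1"]
    assms(2) by (simp add: profile_grad_def inner_axis)

lemma weak_grad_profile: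
  assumes "a \<ge> 0"
  shows "weak_grad_W1p_loc (- {0}) p (\<lambda>x::real^'n::finite. profile a (norm x)) (profile_grad a)"
  unfolding weak_grad_W1p_loc_def
proof (intro conjI allI impI)
  have p: "p > 0" using p_gt_1 by simp
  have cont_profile: "continuous_on (- {0}) (\<lambda>x::real^'n. profile a (norm x))"
    using continuous_on_radial_times[of "profile a" "\<lambda>_. 1"] has_real_derivative_profile[OF assms]
    by (auto intro: DERIV_isCont)
  have cont_grad: "continuous_on (- {0}) (\<lambda>x::real^'n. profile_grad a x $ i)" for i
  proof -
    have "continuous_on (- {0}) (\<lambda>x::real^'n. slope a (norm x) / norm x * x $ i)"
      by (rule continuous_on_radial_times)
        (auto intro!: continuous_intros isCont_slope[OF assms] linear_continuous_on bounded_linear_vec_nth)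
    then show ?thesis by (simp add: profile_grad_def)
  qed
  show "loc_Lp (- {0}) p (\<lambda>x::real^'n. profile a (norm x))"
    by (rule loc_Lp_continuous[OF cont_profile p])
  show "loc_Lp (- {0}) p (\<lambda>x::real^'n. profile_grad a x $ i)" for i
    by (rule loc_Lp_continuous[OF cont_grad p])
  fix \<phi> :: "real^'n \<Rightarrow> real" and i :: 'n
  assume \<phi>: "test_fun (- {0}) \<phi>"
  show "(\<integral>x. profile a (norm x) * partial_deriv i \<phi> x \<partial>lebesgue)
      = - (\<integral>x. profile_grad a x $ i * \<phi> x \<partial>lebesgue)"
    by (rule test_fun_integration_by_parts(3)[OF \<phi> _ _ cont_profile cont_grad])
      (auto intro: has_real_derivative_profile_line[OF assms])
qed

lemma has_real_derivative_flux_component: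
  fixes x :: "real^'n::finite"
  assumes "x \<noteq> 0"
  shows "((\<lambda>t. \<Psi> a (norm (x + t *\<^sub>R axis i 1)) * (x + t *\<^sub>R axis i 1) $ i) has_real_derivative
      d\<Psi> a (norm x) * (x $ i / norm x) * x $ i + \<Psi> a (norm x)) (at 0)"
proof -
  have "((\<lambda>t. \<Psi> a (norm (x + t *\<^sub>R axis i 1))) has_real_derivative d\<Psi> a (norm x) * (x $ i / norm x)) (at 0)"
    using has_real_derivative_radial_line[OF assms has_real_derivative_\<Psi>, of a "axis i 1"] assms
    by (simp add: inner_axis)
  moreover have "((\<lambda>t. x $ i + t) has_real_derivative 1) (at 0)"
    by (auto intro!: derivative_eq_intros)
  ultimately show ?thesis
    using DERIV_mult by (fastforce simp: axis_def)
qed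

lemma sum_flux_component_derivatives:
  fixes x :: "real^'n::finite"
  assumes "x \<noteq> 0"
  shows "(\<Sum>i\<in>UNIV. d\<Psi> a (norm x) * (x $ i / norm x) * x $ i + \<Psi> a (norm x))
      = norm x * d\<Psi> a (norm x) + real CARD('n) * \<Psi> a (norm x)"
proof -
  have "(\<Sum>i\<in>UNIV. d\<Psi> a (norm x) * (x $ i / norm x) * x $ i)
      = d\<Psi> a (norm x) / norm x * (\<Sum>i\<in>UNIV. x $ i * x $ i)"
    by (simp add: sum_distrib_left sum_divide_distrib algebra_simps)
  also have "\<dots> = norm x * d\<Psi> a (norm x)"
  proof -
    have "(\<Sum>i\<in>UNIV. x $ i * x $ i) = (norm x)\<^sup>2"
      by (simp add: power2_norm_eq_inner inner_vec_def)
    then show ?thesis using assms by (simp add: power2_eq_square)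
  qed
  finally show ?thesis by (simp add: sum.distrib)
qed

lemma flux_component_by_parts:
  fixes \<eta> :: "real^'n::finite \<Rightarrow> real" and a :: real and i :: 'n
  assumes \<eta>: "test_fun (- {0}) \<eta>"
  defines "W \<equiv> \<lambda>x::real^'n. \<Psi> a (norm x) * x $ i"
    and "W' \<equiv> \<lambda>x::real^'n. d\<Psi> a (norm x) * (x $ i / norm x) * x $ i + \<Psi> a (norm x)"
  shows "integrable lebesgue (\<lambda>x. W x * partial_deriv i \<eta> x)"
    and "integrable lebesgue (\<lambda>x. W' x * \<eta> x)"
    and "(\<integral>x. W x * partial_deriv i \<eta> x \<partial>lebesgue) = - (\<integral>x. W' x * \<eta> x \<partial>lebesgue)"
proof -
  have U: "open (- {0::real^'n})" by (simp add: open_Compl)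
  have dW: "((\<lambda>t. W (x + t *\<^sub>R axis i 1)) has_real_derivative W' x) (at 0)" if "x \<in> - {0}" for x
    unfolding W_def W'_def by (rule has_real_derivative_flux_component) (use that in simp)
  have cW: "continuous_on (- {0}) W"
    unfolding W_def
    by (rule continuous_on_radial_times)
      (auto intro: DERIV_isCont has_real_derivative_\<Psi> linear_continuous_on bounded_linear_vec_nth)
  have cW': "continuous_on (- {0}) W'"
  proof (rule continuous_at_imp_continuous_on, intro ballI)
    fix x :: "real^'n" assume "x \<in> - {0}"
    then have "x \<noteq> 0" "norm x > 0" by auto
    then show "isCont W' x"
      unfolding W'_def
      by (intro continuous_intros isCont_radial isCont_d\<Psi> DERIV_isCont[OF has_real_derivative_\<Psi>]
          linear_continuous_at bounded_linear_vec_nth) auto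
  qed
  show "integrable lebesgue (\<lambda>x. W x * partial_deriv i \<eta> x)"
    and "integrable lebesgue (\<lambda>x. W' x * \<eta> x)"
    and "(\<integral>x. W x * partial_deriv i \<eta> x \<partial>lebesgue) = - (\<integral>x. W' x * \<eta> x \<partial>lebesgue)"
    using test_fun_integration_by_parts[OF \<eta> U dW cW cW'] by blast+
qed

lemma flux_integral_by_parts:
  fixes \<eta> :: "real^'n::finite \<Rightarrow> real"
  assumes n: "n = real CARD('n)" and "a \<ge> 0" and \<eta>: "test_fun (- {0}) \<eta>"
  shows "integrable lebesgue (\<lambda>x. d\<Phi> (norm x) * norm x powr (1 - n) * \<eta> x)"
    and "(\<integral>x. norm (profile_grad a x) powr (p - 2) * A (norm (profile_grad a x))
          * (profile_grad a x \<bullet> (\<chi> i. partial_deriv i \<eta> x)) \<partial>lebesgue)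
        = - (\<integral>x. d\<Phi> (norm x) * norm x powr (1 - n) * \<eta> x \<partial>lebesgue)"
proof -
  define W where "W i x = \<Psi> a (norm x) * x $ i" for i and x :: "real^'n"
  define W' where "W' i x = d\<Psi> a (norm x) * (x $ i / norm x) * x $ i + \<Psi> a (norm x)"
    for i and x :: "real^'n"
  have by_parts: "integrable lebesgue (\<lambda>x. W i x * partial_deriv i \<eta> x)"
      "integrable lebesgue (\<lambda>x. W' i x * \<eta> x)"
      "(\<integral>x. W i x * partial_deriv i \<eta> x \<partial>lebesgue) = - (\<integral>x. W' i x * \<eta> x \<partial>lebesgue)" for i
    unfolding W_def W'_def by (rule flux_component_by_parts[OF \<eta>])+
  have \<eta>0: "\<eta> 0 = 0"
    using test_fun_vanishes_outside[OF \<eta>] by simp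
  have divergence: "(\<Sum>i\<in>UNIV. W' i x * \<eta> x) = d\<Phi> (norm x) * norm x powr (1 - n) * \<eta> x" for x
  proof (cases "x = 0")
    case False
    then show ?thesis
      using sum_flux_component_derivatives[OF False, of a] radial_divergence[of "norm x" a]
      by (simp add: W'_def n sum_distrib_right[symmetric])
  qed (simp add: \<eta>0)
  have "(\<integral>x. norm (profile_grad a x) powr (p - 2) * A (norm (profile_grad a x))
          * (profile_grad a x \<bullet> (\<chi> i. partial_deriv i \<eta> x)) \<partial>lebesgue)
      = (\<integral>x. (\<Sum>i\<in>UNIV. W i x * partial_deriv i \<eta> x) \<partial>lebesgue)"
    by (simp only: flux_of_profile_grad[OF assms(2)]) (simp add: W_def inner_vec_def sum_distrib_left mult.assoc)
  also have "\<dots> = (\<Sum>i\<in>UNIV. - (\<integral>x. W' i x * \<eta> x \<partial>lebesgue))"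
    using by_parts by (simp add: Bochner_Integration.integral_sum)
  also have "\<dots> = - (\<integral>x. d\<Phi> (norm x) * norm x powr (1 - n) * \<eta> x \<partial>lebesgue)"
    using by_parts by (simp add: Bochner_Integration.integral_sum[symmetric] sum_negf divergence)
  finally show "(\<integral>x. norm (profile_grad a x) powr (p - 2) * A (norm (profile_grad a x))
          * (profile_grad a x \<bullet> (\<chi> i. partial_deriv i \<eta> x)) \<partial>lebesgue)
      = - (\<integral>x. d\<Phi> (norm x) * norm x powr (1 - n) * \<eta> x \<partial>lebesgue)" .
  show "integrable lebesgue (\<lambda>x. d\<Phi> (norm x) * norm x powr (1 - n) * \<eta> x)"
    using by_parts by (simp add: divergence[symmetric])
qed

lemma weak_supersol_profile:
  fixes f :: "real^'n::finite \<Rightarrow> real"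
  assumes n: "n = real CARD('n)" and a: "a \<ge> 0" and f_meas: "f \<in> borel_measurable lebesgue"
    and f_bound: "AE x in lebesgue. \<bar>f x\<bar> \<le> 2 * \<beta> * K * (1 + (norm x)\<^sup>2) powr (- \<beta> - n / 2)"
  shows "weak_supersol (- {0}) p A f (\<lambda>x. profile a (norm x))"
  unfolding weak_supersol_def
proof (intro exI[of _ "profile_grad a"] conjI allI impI weak_grad_profile[OF a], elim conjE)
  fix \<eta> :: "real^'n \<Rightarrow> real"
  assume \<eta>: "test_fun (- {0}) \<eta>" and \<eta>_nonneg: "\<forall>x. 0 \<le> \<eta> x"
  note by_parts = flux_integral_by_parts[OF n a \<eta>]
  have "\<eta> \<in> borel_measurable lborel"
    using borel_measurable_continuous_onI[OF differentiable_imp_continuous_on[OF test_fun_differentiable(1)[OF \<eta>]]]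
    by simp
  then have "\<eta> \<in> borel_measurable lebesgue"
    by (simp add: measurable_completion)
  then have "(\<lambda>x. f x * \<eta> x) \<in> borel_measurable lebesgue"
    using f_meas by measurable
  moreover have "AE x in lebesgue. \<bar>f x * \<eta> x\<bar> \<le> - (d\<Phi> (norm x) * norm x powr (1 - n) * \<eta> x)"
    using f_bound
  proof eventually_elim
    case (elim x)
    show ?case
    proof (cases "x = 0")
      case False
      then have "\<bar>f x\<bar> \<le> - (d\<Phi> (norm x) * norm x powr (1 - n))"
        using elim neg_radial_divergence_lower[of "norm x"] by simp
      then have "\<bar>f x\<bar> * \<eta> x \<le> - (d\<Phi> (norm x) * norm x powr (1 - n)) * \<eta> x"
        using \<eta>_nonneg by (intro mult_right_mono) auto
      then show ?thesis using \<eta>_nonneg by (simp add: abs_mult abs_of_nonneg)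
    qed (use test_fun_vanishes_outside[OF \<eta>] in simp)
  qed
  ultimately have "(\<integral>x. f x * \<eta> x \<partial>lebesgue) \<le> (\<integral>x. - (d\<Phi> (norm x) * norm x powr (1 - n) * \<eta> x) \<partial>lebesgue)"
    using by_parts(1) by (intro integral_le_of_abs_le) auto
  then show "(\<integral>x. norm (profile_grad a x) powr (p - 2) * A (norm (profile_grad a x))
      * (profile_grad a x \<bullet> (\<chi> i. partial_deriv i \<eta> x)) \<partial>lebesgue) \<ge> (\<integral>x. f x * \<eta> x \<partial>lebesgue)"
    using by_parts(2) by simp
qed

end

lemma radial_supersolution_family:
  fixes f :: "real^'n::finite \<Rightarrow> real"
  assumes dim: "CARD('n) \<ge> 2" "p > real CARD('n)"
    and A: "admissible_coefficient p \<delta> L A"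
    and f_meas: "f \<in> borel_measurable lebesgue" and f_bounded: "AE x in lebesgue. \<bar>f x\<bar> \<le> M"
    and f_decay: "\<forall>x. norm x \<ge> R \<longrightarrow> \<bar>f x\<bar> \<le> Cf * norm x powr (- (p + \<epsilon>))"
    and Cf_pos: "Cf > 0" and eps_pos: "\<epsilon> > 0"
  shows "\<exists>V. (\<forall>a\<ge>0. weak_supersol (- {0}) p A f (\<lambda>x. V a (norm x))) \<and>
    (\<forall>a\<ge>0. V a 0 = 0 \<and> mono_on {0<..} (V a)) \<and>
    (\<forall>a>0. \<not> bdd_above (V a ` {0<..}) \<and>
      (\<forall>r\<ge>0. V a r \<ge> a * r powr ((p - real CARD('n)) / (p - 1)))) \<and>
    (\<exists>C0>0. \<forall>r>0. V 0 r \<le> C0) \<and>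
    (\<forall>r>0. ((\<lambda>a. V a r) \<longlongrightarrow> V 0 r) (at_right 0))"
proof -
  obtain C where "C > 0" and f_bound: "AE x in lebesgue. \<bar>f x\<bar> \<le> C * (1 + (norm x)\<^sup>2) powr (- (p + \<epsilon>) / 2)"
    using decay_imp_bracket_bound[OF f_bounded f_decay[rule_format]] dim(2) Cf_pos eps_pos by auto
  (* Choosing 2\<beta> = p + \<epsilon> - n and K = C / (2\<beta>) makes the lower bound for the negative
     divergence of the flux coincide with the bound on |f|; \<beta> > (p - n) / 2 is \<epsilon> > 0. *)
  define n where "n = real CARD('n)"
  define \<beta> where "\<beta> = (p + \<epsilon> - n) / 2"
  have "\<beta> > 0" using dim(2) eps_pos by (simp add: \<beta>_def n_def)
  interpret radial_profile p \<delta> L A n "C / (2 * \<beta>)" \<beta>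
    using A dim \<open>C > 0\<close> \<open>\<beta> > 0\<close> eps_pos
    by (simp add: radial_profile_def radial_profile_axioms_def \<beta>_def n_def)
  have exponent: "- \<beta> - n / 2 = - (p + \<epsilon>) / 2" by (simp add: \<beta>_def field_simps)
  have coefficient: "2 * \<beta> * (C / (2 * \<beta>)) = C" using \<open>\<beta> > 0\<close> by simp
  have f_bound': "AE x in lebesgue. \<bar>f x\<bar> \<le> 2 * \<beta> * (C / (2 * \<beta>)) * (1 + (norm x)\<^sup>2) powr (- \<beta> - n / 2)"
    unfolding exponent coefficient by (fact f_bound)
  show ?thesis
  proof (intro exI[of _ profile] conjI allI impI)
    show "weak_supersol (- {0}) p A f (\<lambda>x. profile a (norm x))" if "a \<ge> 0" for a
      using weak_supersol_profile[OF n_def that f_meas f_bound'] .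
    show "profile a 0 = 0" for a
      by (simp add: profile_def)
    show "mono_on {0<..} (profile a)" if "a \<ge> 0" for a
      using profile_mono[OF that] by (auto simp: mono_on_def)
    show "\<not> bdd_above (profile a ` {0<..})" if "a > 0" for a
      using profile_unbounded[OF that] .
    show "profile a r \<ge> a * r powr ((p - real CARD('n)) / (p - 1))" if "a > 0" "r \<ge> 0" for a r
      using profile_lower[of a r] that by (simp add: n_def)
    show "\<exists>C0>0. \<forall>r>0. profile 0 r \<le> C0"
      by (rule profile_0_bounded)
    show "((\<lambda>a. profile a r) \<longlongrightarrow> profile 0 r) (at_right 0)" if "r > 0" for r
      using profile_tendsto[OF that] .
  qed
qed

theorem lemma2:
  fixes p L :: real
  assumes n2: "CARD('n::finite) \<ge> 2"
    and pn: "p > real CARD('n)"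
    and Lpos: "L > 0"
  shows "\<exists>c0>0. \<forall>(A::real \<Rightarrow> real) \<delta> (f::real^'n \<Rightarrow> real) Cf \<epsilon>.
     continuous_on {0..} A \<and> \<delta> > 0 \<and> (\<forall>t\<ge>0. \<delta> \<le> A t \<and> A t \<le> L) \<and>
     strict_mono_on {0<..} (\<lambda>t. t powr (p - 1) * A t) \<and>
     f \<in> borel_measurable lebesgue \<and> (\<exists>M. AE x in lebesgue. \<bar>f x\<bar> \<le> M) \<and>
     Cf > 0 \<and> \<epsilon> > 0 \<and> (\<exists>R. \<forall>x. norm x \<ge> R \<longrightarrow> \<bar>f x\<bar> \<le> Cf * norm x powr (-(p + \<epsilon>)))
     \<longrightarrow>
     (\<exists>V :: real \<Rightarrow> real \<Rightarrow> real.
        (\<forall>a\<ge>0. weak_supersol (- {0}) p A f (\<lambda>x. V a (norm x))) \<and>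
        (\<forall>a\<ge>0. V a 0 = 0 \<and> mono_on {0<..} (V a)) \<and>
        (\<forall>a>0. \<not> bdd_above (V a ` {0<..}) \<and>
               (\<forall>r\<ge>0. V a r \<ge> c0 * a * r powr ((p - real CARD('n)) / (p - 1)))) \<and>
        (\<exists>C0>0. \<forall>r>0. V 0 r \<le> C0) \<and>
        (\<forall>r>0. ((\<lambda>a. V a r) \<longlongrightarrow> V 0 r) (at_right 0)))"
  apply (intro exI[of _ 1] conjI allI impI zero_less_one, unfold mult_1, elim conjE exE)
  subgoal for A \<delta> f Cf \<epsilon> M R
    by (rule radial_supersolution_family[OF n2 pn, where A = A and \<delta> = \<delta> and L = L and f = f
        and M = M and R = R and Cf = Cf and \<epsilon> = \<epsilon>])
      (use n2 pn in \<open>auto simp: admissible_coefficient_def\<close>)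
  done

end
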